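(* Let $n \ge 1$ and let $a_1,\dots,a_n > 0$. Let $\Lambda_o \subset \mathbb{R}^n$ be the orthogonal lattice generated by $a_1\mathbf{e}_1,\dots,a_n\mathbf{e}_n$ (where $\mathbf{e}_i$ are the standard basis vectors). Let $\Lambda_s \neq \Lambda_o$ be a lattice in $\mathbb{R}^n$ having a generator matrix that is an upper triangular $n\times n$ real matrix with diagonal entries $a_1,\dots,a_n$ (a "skewing" of $\Lambda_o$). Then for all $x>0$, $$\sum_{\mathbf{t}\in\Lambda_s} e^{-x\|\mathbf{t}\|^2} < \sum_{\mathbf{t}\in\Lambda_o} e^{-x\|\mathbf{t}\|^2}.$$
   Context: A lattice $\Lambda\subset\mathbb{R}^n$ generated by a matrix $M\in\mathbb{R}^{n\times n}$ with linearly independent columns is $\{M\omega : \omega\in\mathbb{Z}^n\}$. $\|\cdot\|$ is the Euclidean norm. *)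

theory Defs
  imports "HOL-Analysis.Analysis"
begin

text \<open>Lattice generated by the columns of M: the set of all M w with w an integer vector.
  Entry M $ i $ j is row i, column j.\<close>
definition lattice_gen :: "real^'n^'n \<Rightarrow> (real^'n) set" where
  "lattice_gen M = {M *v w | w. \<forall>i. w $ i \<in> \<int>}"

definition diag_mat :: "real^'n \<Rightarrow> real^'n^'n" where
  "diag_mat a = (\<chi> i j. if i = j then a $ i else 0)"

class finite_linorder = finite + linorder

instance num1 :: finite_linorder ..
instance bit0 :: (finite) finite_linorder ..
instance bit1 :: (finite) finite_linorder ..

end

theory Submission
  imports Defs
begin

text \<open>Let \<open>theta s c = \<Sum>\<^sub>k exp (- s (k + c)\<^sup>2)\<close>. Splitting pairs of integers by parity gives a
  duplication formula expressing \<open>theta s u * theta s v\<close> through \<open>theta (2 s)\<close>; with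
  Cauchy-Schwarz it yields \<open>theta s c ^ 4 \<le> theta s 0 ^ 3 * theta s (2 c)\<close>, so \<open>theta s\<close> is
  maximal at \<open>0\<close>. The maximum is strict off \<open>\<int>\<close>: equality would persist for all \<open>2\<^sup>n s\<close>,
  contradicting the decay of \<open>theta s c\<close> as \<open>s \<rightarrow> \<infinity>\<close>.

  For the lattice, sum over the integer coordinate vector \<open>w\<close> one coordinate at a time, working
  through the rows of the triangular generator from the top. At row \<open>i\<close> the \<open>i\<close>-th column is
  \<open>a\<^sub>i e\<^sub>i\<close>, so each fibre sum is a theta sum shifted by \<open>(M w)\<^sub>i / a\<^sub>i\<close>; replacing the row
  by its diagonal entry removes the shift and does not decrease the total, strictly so if some
  ratio \<open>M\<^sub>i\<^sub>k / a\<^sub>i\<close> is not an integer. If all these ratios are integers, the skewed lattice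
  is a proper sublattice of the orthogonal one.\<close>

section \<open>Theta sums\<close>

lemma summable_on_exp_neg_abs_int:
  fixes \<alpha> :: real
  assumes "\<alpha> > 0"
  shows "(\<lambda>k::int. exp (- \<alpha> * \<bar>of_int k\<bar>)) summable_on UNIV"
proof -
  have "summable (\<lambda>n. exp (- \<alpha>) ^ n)"
    using assms by (intro summable_geometric) simp
  then have geo: "(\<lambda>n::nat. exp (- \<alpha> * real n)) summable_on UNIV"
    by (subst summable_on_UNIV_nonneg_real_iff) (auto simp: exp_of_nat_mult [symmetric] mult.commute)
  have "(\<lambda>k::int. exp (- \<alpha> * \<bar>of_int k\<bar>)) summable_on range int"
    using geo by (subst summable_on_reindex) (auto simp: o_def)
  moreover have "(\<lambda>k::int. exp (- \<alpha> * \<bar>of_int k\<bar>)) summable_on range (\<lambda>n. - int n)"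
    using geo by (subst summable_on_reindex) (auto simp: o_def inj_on_def)
  moreover have "range int \<union> range (\<lambda>n. - int n) = UNIV"
    by (auto simp: image_iff) (metis int_cases2)
  ultimately show ?thesis
    by (metis summable_on_union)
qed

definition theta :: "real \<Rightarrow> real \<Rightarrow> real" where
  "theta s c = (\<Sum>\<^sub>\<infinity>k::int. exp (- s * (of_int k + c)\<^sup>2))"

lemma theta_summand_le:
  fixes s c :: real and k :: int
  assumes "s > 0"
  shows "exp (- s * (of_int k + c)\<^sup>2) \<le> exp (s * c\<^sup>2) * exp (- (s / 2) * \<bar>of_int k\<bar>)"
proof -
  have "\<bar>of_int k\<bar> \<le> \<bar>of_int k :: real\<bar>\<^sup>2"
    using self_le_power [of "\<bar>of_int k :: real\<bar>" 2] by (cases "k = 0") auto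
  then have "\<bar>of_int k\<bar> \<le> (of_int k :: real)\<^sup>2"
    by simp
  moreover have "2 * (of_int k + c)\<^sup>2 + 2 * c\<^sup>2 - (of_int k)\<^sup>2 = (of_int k + 2 * c)\<^sup>2"
    by (simp add: power2_eq_square algebra_simps)
  ultimately have "\<bar>of_int k\<bar> \<le> 2 * (of_int k + c)\<^sup>2 + 2 * c\<^sup>2"
    using zero_le_power2 [of "of_int k + 2 * c"] by linarith
  then have "(s / 2) * \<bar>of_int k\<bar> \<le> (s / 2) * (2 * (of_int k + c)\<^sup>2 + 2 * c\<^sup>2)"
    using assms by (intro mult_left_mono) auto
  then have "- s * (of_int k + c)\<^sup>2 \<le> s * c\<^sup>2 + - (s / 2) * \<bar>of_int k\<bar>"
    by (simp add: algebra_simps)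
  then show ?thesis
    by (simp add: exp_add [symmetric])
qed

lemma theta_summable:
  fixes s c :: real
  assumes "s > 0"
  shows "(\<lambda>k::int. exp (- s * (of_int k + c)\<^sup>2)) summable_on UNIV"
proof -
  have "(\<lambda>k::int. exp (s * c\<^sup>2) * exp (- (s / 2) * \<bar>of_int k\<bar>)) summable_on UNIV"
    using assms by (intro summable_on_cmult_right summable_on_exp_neg_abs_int) simp
  then show ?thesis
    by (rule summable_on_comparison_test) (use assms theta_summand_le in auto)
qed

lemma has_sum_theta:
  "s > 0 \<Longrightarrow> ((\<lambda>k::int. exp (- s * (of_int k + c)\<^sup>2)) has_sum theta s c) UNIV"
  unfolding theta_def by (rule has_sum_infsum, rule theta_summable)

lemma theta_summand_le_theta:
  "s > 0 \<Longrightarrow> exp (- s * (of_int k + c)\<^sup>2) \<le> theta s c"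
  using finite_sum_le_has_sum [OF has_sum_theta, of s "{k}" c] by auto

lemma theta_pos: "s > 0 \<Longrightarrow> theta s c > 0"
  using theta_summand_le_theta [of s 0 c] by (meson exp_gt_zero less_le_trans)

lemma one_le_theta_zero: "s > 0 \<Longrightarrow> 1 \<le> theta s 0"
  using theta_summand_le_theta [of s 0 0] by simp

lemma theta_add_int:
  assumes "s > 0"
  shows "theta s (c + of_int m) = theta s c"
proof -
  have "bij_betw (\<lambda>k::int. k + m) UNIV UNIV"
    by (rule bij_betwI [where g = "\<lambda>k. k - m"]) auto
  from has_sum_reindex_bij_betw [OF this, of "\<lambda>k. exp (- s * (of_int k + c)\<^sup>2)"]
  have "((\<lambda>k::int. exp (- s * (of_int k + (c + of_int m))\<^sup>2)) has_sum theta s c) UNIV"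
    using has_sum_theta [OF assms, of c] by (simp add: add_ac)
  then show ?thesis
    using has_sum_theta [OF assms] has_sum_unique by blast
qed

lemma theta_bounded:
  assumes "s > 0"
  shows "bdd_above (range (theta s))"
proof
  let ?B = "exp s * (\<Sum>\<^sub>\<infinity>k::int. exp (- (s / 2) * \<bar>of_int k\<bar>))"
  fix y assume "y \<in> range (theta s)"
  then obtain c where "y = theta s c" by blast
  define f where "f = c - of_int \<lfloor>c\<rfloor>"
  have f: "0 \<le> f" "f < 1"
    unfolding f_def by linarith+
  have "y = theta s f"
    using theta_add_int [OF assms, of f "\<lfloor>c\<rfloor>"] \<open>y = theta s c\<close> by (simp add: f_def)
  also have "\<dots> \<le> (\<Sum>\<^sub>\<infinity>k::int. exp (s * f\<^sup>2) * exp (- (s / 2) * \<bar>of_int k\<bar>))"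
    unfolding theta_def using assms
    by (intro infsum_mono theta_summable theta_summand_le summable_on_cmult_right
        summable_on_exp_neg_abs_int) auto
  also have "\<dots> \<le> ?B"
  proof -
    have "f\<^sup>2 \<le> 1"
      using f by (simp add: abs_square_le_1)
    then have "exp (s * f\<^sup>2) \<le> exp s"
      using assms by (simp add: mult_left_le)
    moreover have "0 \<le> (\<Sum>\<^sub>\<infinity>k::int. exp (- (s / 2) * \<bar>of_int k\<bar>))"
      by (simp add: infsum_nonneg)
    ultimately show ?thesis
      by (simp add: infsum_cmult_right' mult_right_mono)
  qed
  finally show "y \<le> ?B" .
qed

lemma has_sum_cartesian_product_nonneg:
  fixes f g :: "_ \<Rightarrow> real"
  assumes f: "(f has_sum a) A" and g: "(g has_sum b) B"
    and "\<And>x. f x \<ge> 0" and "\<And>y. g y \<ge> 0"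
  shows "((\<lambda>(x, y). f x * g y) has_sum (a * b)) (A \<times> B)"
proof -
  have fibre: "((\<lambda>y. (\<lambda>(x, y). f x * g y) (x, y)) has_sum (f x * b)) B" for x
    using has_sum_cmult_right [OF g, of "f x"] by simp
  have "((\<lambda>x. f x * b) has_sum (a * b)) A"
    by (rule has_sum_cmult_left [OF f])
  moreover have "(\<lambda>(x, y). f x * g y) summable_on A \<times> B"
    using fibre calculation assms by (intro summable_on_SigmaI) (auto intro: has_sum_imp_summable)
  ultimately show ?thesis
    using has_sum_SigmaI [OF fibre] by simp
qed

text \<open>Split the pairs \<open>(k, l)\<close> by the parity of \<open>k + l\<close> and
  substitute \<open>(k, l) = (i + j + \<delta>, i - j)\<close> with \<open>\<delta> \<in> {0, 1}\<close>.\<close>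

lemma theta_mult_theta:
  assumes "s > 0"
  shows "theta s u * theta s v = theta (2 * s) ((u + v) / 2) * theta (2 * s) ((u - v) / 2)
           + theta (2 * s) ((u + v + 1) / 2) * theta (2 * s) ((u - v + 1) / 2)"
proof -
  define F where "F = (\<lambda>(k::int, l::int). exp (- s * (of_int k + u)\<^sup>2) * exp (- s * (of_int l + v)\<^sup>2))"
  define P where "P \<delta> = (\<lambda>(i::int, j::int). (i + j + \<delta>, i - j))" for \<delta> :: int
  have F: "(F has_sum (theta s u * theta s v)) UNIV"
    using has_sum_cartesian_product_nonneg [OF has_sum_theta has_sum_theta] assms by (simp add: F_def)
  have P: "(F has_sum theta (2 * s) ((u + v + \<delta>) / 2) * theta (2 * s) ((u - v + \<delta>) / 2)) (range (P \<delta>))"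
    for \<delta> :: int
  proof -
    have "F \<circ> P \<delta> = (\<lambda>(i, j). exp (- (2 * s) * (of_int i + (u + v + \<delta>) / 2)\<^sup>2)
        * exp (- (2 * s) * (of_int j + (u - v + \<delta>) / 2)\<^sup>2))"
    proof (intro ext, clarify)
      fix i j :: int
      have "- s * (of_int (i + j + \<delta>) + u)\<^sup>2 + - s * (of_int (i - j) + v)\<^sup>2
          = - (2 * s) * (of_int i + (u + v + \<delta>) / 2)\<^sup>2 + - (2 * s) * (of_int j + (u - v + \<delta>) / 2)\<^sup>2"
        by (simp add: power2_eq_square field_simps)
      then show "(F \<circ> P \<delta>) (i, j) = exp (- (2 * s) * (of_int i + (u + v + \<delta>) / 2)\<^sup>2)
          * exp (- (2 * s) * (of_int j + (u - v + \<delta>) / 2)\<^sup>2)"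
        by (simp add: F_def P_def exp_add [symmetric])
    qed
    then have "(F \<circ> P \<delta> has_sum theta (2 * s) ((u + v + \<delta>) / 2) * theta (2 * s) ((u - v + \<delta>) / 2))
        (UNIV \<times> UNIV)"
      using assms by (simp only:) (intro has_sum_cartesian_product_nonneg has_sum_theta; simp)
    moreover have "inj (P \<delta>)"
      by (auto simp: P_def inj_on_def)
    ultimately show ?thesis
      by (simp add: has_sum_reindex)
  qed
  have "range (P 0) \<inter> range (P 1) = {}"
    by (auto simp: P_def) presburger
  moreover have "range (P 0) \<union> range (P 1) = UNIV"
  proof -
    have "(k, l) \<in> range (P 0) \<union> range (P 1)" for k l
    proof (cases "even (k + l)")
      case True
      then obtain m where "k + l = 2 * m" by blast
      then have "(k, l) = P 0 (m, k - m)" by (simp add: P_def)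
      then show ?thesis by blast
    next
      case False
      then obtain m where "k + l = 2 * m + 1" using oddE by blast
      then have "(k, l) = P 1 (m, k - m - 1)" by (simp add: P_def)
      then show ?thesis by blast
    qed
    then show ?thesis by auto
  qed
  ultimately have "(F has_sum theta (2 * s) ((u + v) / 2) * theta (2 * s) ((u - v) / 2)
      + theta (2 * s) ((u + v + 1) / 2) * theta (2 * s) ((u - v + 1) / 2)) UNIV"
    using has_sum_Un_disjoint [OF P [of 0] P [of 1]] by simp
  then show ?thesis
    using F has_sum_unique by blast
qed

lemma theta_sq:
  assumes "s > 0"
  shows "(theta s c)\<^sup>2 = theta (2 * s) c * theta (2 * s) 0 + theta (2 * s) (c + 1 / 2) * theta (2 * s) (1 / 2)"
  using theta_mult_theta [OF assms, of c c] by (simp add: power2_eq_square add_divide_distrib)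

lemma theta_double_mult_theta_zero:
  assumes "s > 0"
  shows "theta s (2 * c) * theta s 0 = (theta (2 * s) c)\<^sup>2 + (theta (2 * s) (c + 1 / 2))\<^sup>2"
  using theta_mult_theta [OF assms, of "2 * c" 0] by (simp add: power2_eq_square add_divide_distrib)

lemma theta_pow4_le:
  assumes "s > 0"
  shows "theta s c ^ 4 \<le> theta s 0 ^ 3 * theta s (2 * c)"
proof -
  define A B X Y where "A = theta (2 * s) 0" and "B = theta (2 * s) (1 / 2)"
    and "X = theta (2 * s) c" and "Y = theta (2 * s) (c + 1 / 2)"
  have "theta s c ^ 4 = ((theta s c)\<^sup>2)\<^sup>2"
    by simp
  also have "\<dots> = (X * A + Y * B)\<^sup>2"
    using theta_sq [OF assms, of c] by (simp add: A_def B_def X_def Y_def)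
  also have "\<dots> \<le> (A\<^sup>2 + B\<^sup>2) * (X\<^sup>2 + Y\<^sup>2)"
    using zero_le_power2 [of "X * B - Y * A"] by (simp add: power2_eq_square algebra_simps)
  also have "\<dots> = (theta s 0)\<^sup>2 * (theta s (2 * c) * theta s 0)"
    using theta_sq [OF assms, of 0] theta_double_mult_theta_zero [OF assms, of c]
    by (simp add: A_def B_def X_def Y_def power2_eq_square)
  also have "\<dots> = theta s 0 ^ 3 * theta s (2 * c)"
    by (simp add: power2_eq_square power3_eq_cube)
  finally show ?thesis .
qed

text \<open>Iterating \<open>theta_pow4_le\<close> at the supremum \<open>M\<close> gives \<open>M\<^sup>4 \<le> theta s 0 ^ 3 * M\<close>.\<close>

lemma theta_le_theta_zero:
  assumes "s > 0"
  shows "theta s c \<le> theta s 0"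
proof -
  define T M where "T = theta s 0" and "M = Sup (range (theta s))"
  have T: "T > 0"
    using theta_pos [OF assms] by (simp add: T_def)
  have le_M: "theta s c' \<le> M" for c'
    unfolding M_def using theta_bounded [OF assms] by (rule cSup_upper [OF rangeI])
  have M: "M > 0"
    using le_M [of 0] T unfolding T_def by linarith
  have "theta s c' \<le> root 4 (T ^ 3 * M)" for c'
  proof -
    have "T ^ 3 * theta s (2 * c') \<le> T ^ 3 * M"
      using le_M T by (simp add: mult_left_mono)
    then have "theta s c' ^ 4 \<le> T ^ 3 * M"
      using theta_pow4_le [OF assms, of c'] unfolding T_def by linarith
    then have "root 4 (theta s c' ^ 4) \<le> root 4 (T ^ 3 * M)"
      by (simp add: real_root_le_mono)
    then show ?thesis
      using theta_pos [OF assms, of c'] by (simp add: real_root_power_cancel)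
  qed
  then have "M \<le> root 4 (T ^ 3 * M)"
    unfolding M_def by (intro cSup_least) auto
  then have "M ^ 4 \<le> root 4 (T ^ 3 * M) ^ 4"
    using M by (intro power_mono) auto
  also have "\<dots> = T ^ 3 * M"
    using M T by (intro real_root_pow_pos2) auto
  finally have "M ^ 3 * M \<le> T ^ 3 * M"
    by (simp add: power3_eq_cube power4_eq_xxxx)
  then have "M ^ 3 \<le> T ^ 3"
    using M by simp
  then have "M \<le> T"
    using M T by (metis less_imp_le power_mono_iff zero_less_numeral)
  then show ?thesis
    using le_M [of c] by (simp add: T_def)
qed

lemma theta_double_eq:
  assumes "s > 0" and eq: "theta s c = theta s 0"
  shows "theta (2 * s) c = theta (2 * s) 0"
proof -
  define A B X Y where "A = theta (2 * s) 0" and "B = theta (2 * s) (1 / 2)"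
    and "X = theta (2 * s) c" and "Y = theta (2 * s) (c + 1 / 2)"
  have "theta s (2 * c) * theta s 0 \<le> theta s 0 * theta s 0"
    using theta_le_theta_zero [OF assms(1)] theta_pos [OF assms(1)] by (simp add: mult_right_mono)
  then have "X\<^sup>2 + Y\<^sup>2 \<le> A\<^sup>2 + B\<^sup>2"
    using theta_double_mult_theta_zero [OF assms(1), of c] theta_sq [OF assms(1), of 0]
    by (simp add: A_def B_def X_def Y_def power2_eq_square)
  moreover have "X * A + Y * B = A\<^sup>2 + B\<^sup>2"
    using theta_sq [OF assms(1), of c] theta_sq [OF assms(1), of 0] eq
    by (simp add: A_def B_def X_def Y_def power2_eq_square)
  ultimately have "(X - A)\<^sup>2 + (Y - B)\<^sup>2 \<le> 0"
    by (simp add: power2_eq_square algebra_simps)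
  then show ?thesis
    by (simp add: sum_power2_le_zero_iff X_def A_def)
qed

lemma theta_le_exp_mult_theta:
  assumes "0 < s" "s \<le> t" and d: "\<And>k::int. d \<le> (of_int k + c)\<^sup>2"
  shows "theta t c \<le> exp (- (t - s) * d) * theta s c"
proof (rule has_sum_mono [OF has_sum_theta has_sum_cmult_right [OF has_sum_theta]])
  fix k :: int
  have "- (t - s) * (of_int k + c)\<^sup>2 \<le> - (t - s) * d"
    using d [of k] assms by (intro mult_left_mono_neg) auto
  then have "- t * (of_int k + c)\<^sup>2 \<le> - (t - s) * d + - s * (of_int k + c)\<^sup>2"
    by (simp add: algebra_simps)
  then show "exp (- t * (of_int k + c)\<^sup>2) \<le> exp (- (t - s) * d) * exp (- s * (of_int k + c)\<^sup>2)"
    by (simp flip: exp_add)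
qed (use assms in auto)

lemma noninteger_dist_sq_bound:
  fixes c :: real
  assumes "c \<notin> \<int>"
  obtains d where "d > 0" and "\<And>k::int. d \<le> (of_int k + c)\<^sup>2"
proof
  define f where "f = c - of_int \<lfloor>c\<rfloor>"
  have "of_int \<lfloor>c\<rfloor> \<noteq> c"
    using assms by (metis Ints_of_int)
  then have f: "0 < f" "f < 1"
    unfolding f_def by linarith+
  show "min (f\<^sup>2) ((1 - f)\<^sup>2) > 0"
    using f by simp
  fix k :: int
  have "of_int k + c = of_int (k + \<lfloor>c\<rfloor>) + f"
    by (simp add: f_def)
  moreover have "min (f\<^sup>2) ((1 - f)\<^sup>2) \<le> (of_int m + f)\<^sup>2" for m :: int
  proof (cases "m \<ge> 0")
    case True
    then have "f\<^sup>2 \<le> (of_int m + f)\<^sup>2"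
      using f by (intro power_mono) auto
    then show ?thesis by linarith
  next
    case False
    then have "(1 - f)\<^sup>2 \<le> (- (of_int m + f))\<^sup>2"
      using f by (intro power_mono) auto
    then show ?thesis by (metis min.coboundedI2 power2_minus)
  qed
  ultimately show "min (f\<^sup>2) ((1 - f)\<^sup>2) \<le> (of_int k + c)\<^sup>2"
    by presburger
qed

lemma theta_less_theta_zero:
  assumes s: "s > 0" and c: "c \<notin> \<int>"
  shows "theta s c < theta s 0"
proof (rule ccontr)
  assume "\<not> theta s c < theta s 0"
  then have eq: "theta s c = theta s 0"
    using theta_le_theta_zero [OF s, of c] by linarith
  have eq_pow: "theta (2 ^ n * s) c = theta (2 ^ n * s) 0" for n :: nat
  proof (induction n)
    case (Suc n)
    then show ?case
      using theta_double_eq [of "2 ^ n * s" c] s by (simp add: mult.assoc)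
  qed (simp add: eq)
  obtain d where d: "d > 0" "\<And>k::int. d \<le> (of_int k + c)\<^sup>2"
    using noninteger_dist_sq_bound [OF c] by blast
  define T where "T = theta s 0"
  have T: "T \<ge> 1"
    unfolding T_def using s by (rule one_le_theta_zero)
  obtain n :: nat where n: "real n > T / (s * d)"
    using reals_Archimedean2 by blast
  have "T < 1 + real n * (s * d)"
    using n s d by (simp add: field_simps)
  also have "\<dots> \<le> 1 + (2 ^ n * s - s) * d"
  proof -
    have "real (Suc n) \<le> real (2 ^ n)"
      using less_exp [of n] by (simp only: of_nat_le_iff Suc_le_eq)
    then have "real n * (s * d) \<le> (2 ^ n - 1) * (s * d)"
      using s d by (intro mult_right_mono) auto
    then show ?thesis
      by (simp add: algebra_simps)
  qed
  also have "\<dots> \<le> exp ((2 ^ n * s - s) * d)"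
    by (rule exp_ge_add_one_self)
  finally have "exp (- (2 ^ n * s - s) * d) * T < exp (- (2 ^ n * s - s) * d) * exp ((2 ^ n * s - s) * d)"
    by (intro mult_strict_left_mono) auto
  also have "\<dots> = 1"
    by (simp add: algebra_simps flip: exp_add)
  finally have "exp (- (2 ^ n * s - s) * d) * T < 1" .
  moreover have "theta (2 ^ n * s) c \<le> exp (- (2 ^ n * s - s) * d) * T"
    using theta_le_exp_mult_theta [OF s _ d(2), of "2 ^ n * s"] s eq
    by (simp add: T_def)
  moreover have "1 \<le> theta (2 ^ n * s) 0"
    using s by (intro one_le_theta_zero) simp
  ultimately show False
    using eq_pow [of n] by linarith
qed

section \<open>Gaussian sums over lattices\<close>

definition int_vecs :: "(real^'n) set" where
  "int_vecs = {w. \<forall>i. w $ i \<in> \<int>}"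

definition gauss :: "real \<Rightarrow> 'a::real_normed_vector \<Rightarrow> real" where
  "gauss x t = exp (- x * (norm t)\<^sup>2)"

definition diagonalize_rows :: "'n set \<Rightarrow> real^'n^'n \<Rightarrow> real^'n^'n" where
  "diagonalize_rows R N = (\<chi> r j. if r \<in> R \<and> j \<noteq> r then 0 else N $ r $ j)"

lemma lattice_gen_eq_image: "lattice_gen M = (\<lambda>w. M *v w) ` int_vecs"
  by (auto simp: lattice_gen_def int_vecs_def)

lemma gauss_pos: "gauss x t > 0"
  by (simp add: gauss_def)

lemma inj_mult_upper_triangular:
  fixes N :: "real^('n::finite_linorder)^('n::finite_linorder)"
  assumes upper: "\<And>i j. j < i \<Longrightarrow> N $ i $ j = 0" and diag: "\<And>i. N $ i $ i \<noteq> 0"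
  shows "inj ((*v) N)"
proof (rule injI)
  fix u v assume "N *v u = N *v v"
  then have Nd: "N *v (u - v) = 0"
    by (simp add: matrix_vector_mult_diff_distrib)
  show "u = v"
  proof (rule ccontr)
    assume "u \<noteq> v"
    define d where "d = u - v"
    define j where "j = Max {j. d $ j \<noteq> 0}"
    have "{j. d $ j \<noteq> 0} \<noteq> {}"
      using \<open>u \<noteq> v\<close> by (auto simp: d_def vec_eq_iff)
    then have j: "d $ j \<noteq> 0"
      unfolding j_def using Max_in [of "{j. d $ j \<noteq> 0}"] by simp
    have above: "d $ k = 0" if "j < k" for k
      using that Max_ge [of "{j. d $ j \<noteq> 0}" k] unfolding j_def
      by (metis (mono_tags, lifting) finite mem_Collect_eq leD)
    have "N $ j $ k * d $ k = (if k = j then N $ j $ j * d $ j else 0)" for k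
      by (cases k j rule: linorder_cases) (simp_all add: upper above)
    then have "(N *v d) $ j = (\<Sum>k\<in>UNIV. if k = j then N $ j $ j * d $ j else 0)"
      unfolding matrix_vector_mult_def vec_lambda_beta by (rule sum.cong [OF refl])
    then show False
      using Nd j diag [of j] by (simp add: d_def)
  qed
qed

lemma has_sum_lattice_gen_iff:
  assumes "inj ((*v) N)"
  shows "(f has_sum S) (lattice_gen N) \<longleftrightarrow> ((\<lambda>w. f (N *v w)) has_sum S) int_vecs"
  unfolding lattice_gen_eq_image using assms
  by (subst has_sum_reindex) (auto simp: o_def intro: inj_on_subset)

lemma has_sum_int_vecs_iff_fibres:
  fixes f :: "real^'n \<Rightarrow> real"
  assumes nonneg: "\<And>w. f w \<ge> 0"
    and fibre: "\<And>w. w \<in> int_vecs \<Longrightarrow> w $ i = 0 \<Longrightarrow>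
      ((\<lambda>k::int. f (w + of_int k *\<^sub>R axis i 1)) has_sum g w) UNIV"
  shows "(f has_sum S) int_vecs \<longleftrightarrow> (g has_sum S) {w \<in> int_vecs. w $ i = 0}"
proof -
  define Z where "Z = {w \<in> int_vecs. w $ i = 0}"
  define P :: "(real^'n) \<times> int \<Rightarrow> real^'n" where "P = (\<lambda>(w, k). w + of_int k *\<^sub>R axis i 1)"
  have P_nth: "P (w, k) $ j = w $ j + (if j = i then of_int k else 0)" for w k j
    by (simp add: P_def axis_def)
  have "bij_betw P (Z \<times> UNIV) int_vecs"
  proof (rule bij_betwI [where g = "\<lambda>v. ((\<chi> j. if j = i then 0 else v $ j), \<lfloor>v $ i\<rfloor>)"])
    show "P \<in> Z \<times> UNIV \<rightarrow> int_vecs"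
      by (auto simp: Z_def int_vecs_def P_nth)
  qed (auto simp: Z_def int_vecs_def P_nth vec_eq_iff)
  then have "(f has_sum S) int_vecs \<longleftrightarrow> ((\<lambda>p. f (P p)) has_sum S) (Z \<times> UNIV)"
    by (rule has_sum_reindex_bij_betw [symmetric])
  also have "\<dots> \<longleftrightarrow> (g has_sum S) Z"
  proof
    assume "((\<lambda>p. f (P p)) has_sum S) (Z \<times> UNIV)"
    then show "(g has_sum S) Z"
      by (rule has_sum_Sigma') (use fibre in \<open>simp add: Z_def P_def\<close>)
  next
    assume g: "(g has_sum S) Z"
    have "\<And>w. w \<in> Z \<Longrightarrow> ((\<lambda>k. f (P (w, k))) has_sum g w) UNIV"
      using fibre by (simp add: Z_def P_def)
    moreover from this have "(\<lambda>p. f (P p)) summable_on Z \<times> UNIV"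
      using g nonneg by (intro summable_on_SigmaI) (auto intro: has_sum_imp_summable)
    ultimately show "((\<lambda>p. f (P p)) has_sum S) (Z \<times> UNIV)"
      using g by (intro has_sum_SigmaI)
  qed
  finally show ?thesis
    by (simp add: Z_def)
qed

lemma diagonalize_rows_mult_nth:
  "r \<in> R \<Longrightarrow> (diagonalize_rows R N *v w) $ r = N $ r $ r * w $ r"
proof -
  assume "r \<in> R"
  then have "(diagonalize_rows R N *v w) $ r = (\<Sum>j\<in>UNIV. if j = r then N $ r $ r * w $ r else 0)"
    unfolding diagonalize_rows_def matrix_vector_mult_def vec_lambda_beta by (intro sum.cong) auto
  then show ?thesis
    by simp
qed

lemma has_sum_gauss_fibre:
  fixes N :: "real^'n^'n"
  assumes x: "x > 0" and col: "\<And>r. r \<noteq> i \<Longrightarrow> N $ r $ i = 0" and pos: "N $ i $ i > 0"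
    and w: "w $ i = 0"
  shows "((\<lambda>k::int. gauss x (N *v (w + of_int k *\<^sub>R axis i 1))) has_sum
    gauss x (diagonalize_rows {i} N *v w) * theta (x * (N $ i $ i)\<^sup>2) ((N *v w) $ i / N $ i $ i)) UNIV"
proof -
  have Dw_i: "(diagonalize_rows {i} N *v w) $ i = 0"
    using w by (simp add: diagonalize_rows_mult_nth)
  have "gauss x (N *v (w + of_int k *\<^sub>R axis i 1))
      = gauss x (diagonalize_rows {i} N *v w)
        * exp (- (x * (N $ i $ i)\<^sup>2) * (of_int k + (N *v w) $ i / N $ i $ i)\<^sup>2)" for k :: int
  proof -
    define c where "c = (N *v w) $ i + of_int k * N $ i $ i"
    have "N *v (w + of_int k *\<^sub>R axis i 1) = diagonalize_rows {i} N *v w + c *\<^sub>R axis i 1"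
    proof -
      have "(N *v w) $ r = (diagonalize_rows {i} N *v w) $ r" if "r \<noteq> i" for r
        using that by (simp add: diagonalize_rows_def matrix_vector_mult_def)
      moreover have "N *v axis i 1 = N $ i $ i *\<^sub>R axis i 1"
        unfolding matrix_vector_mult_basis using col by (auto simp: column_def vec_eq_iff axis_def)
      ultimately show ?thesis
        using Dw_i by (auto simp: vec_eq_iff c_def matrix_vector_right_distrib
            matrix_vector_mult_scaleR axis_def)
    qed
    moreover have "orthogonal (diagonalize_rows {i} N *v w) (c *\<^sub>R axis i 1)"
      using Dw_i by (simp add: orthogonal_def inner_axis)
    ultimately have "(norm (N *v (w + of_int k *\<^sub>R axis i 1)))\<^sup>2
        = (norm (diagonalize_rows {i} N *v w))\<^sup>2 + c\<^sup>2"
      by (simp add: norm_add_Pythagorean)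
    moreover have "- x * c\<^sup>2 = - (x * (N $ i $ i)\<^sup>2) * (of_int k + (N *v w) $ i / N $ i $ i)\<^sup>2"
      using pos by (simp add: c_def power2_eq_square field_simps)
    ultimately show ?thesis
      unfolding gauss_def by (simp only: distrib_left exp_add)
  qed
  then show ?thesis
    using x pos by (simp only:) (intro has_sum_cmult_right has_sum_theta; simp)
qed

lemma has_sum_gauss_diagonalize_row:
  fixes N :: "real^'n^'n"
  assumes x: "x > 0" and pos: "N $ i $ i > 0" and col: "\<And>r. r \<noteq> i \<Longrightarrow> N $ r $ i = 0"
    and S': "((\<lambda>w. gauss x (diagonalize_rows {i} N *v w)) has_sum S') int_vecs"
  shows "\<exists>S. ((\<lambda>w. gauss x (N *v w)) has_sum S) int_vecs \<and> S \<le> S'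
    \<and> ((\<exists>k. N $ i $ k / N $ i $ i \<notin> \<int>) \<longrightarrow> S < S')"
proof -
  define a N' Z where "a = N $ i $ i" and "N' = diagonalize_rows {i} N"
    and "Z = {w \<in> int_vecs. w $ i = (0::real)}"
  define g g' where "g w = gauss x (N' *v w) * theta (x * a\<^sup>2) ((N *v w) $ i / a)"
    and "g' w = gauss x (N' *v w) * theta (x * a\<^sup>2) 0" for w
  have xa: "x * a\<^sup>2 > 0"
    using x pos by (simp add: a_def)
  have N': "\<And>r. r \<noteq> i \<Longrightarrow> N' $ r $ i = 0" "N' $ i $ i > 0" "N' $ i $ i = a"
    "diagonalize_rows {i} N' = N'"
    using col pos by (auto simp: N'_def a_def diagonalize_rows_def vec_eq_iff)
  have "(N' *v w) $ i = 0" if "w $ i = 0" for w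
    using that by (simp add: N'_def diagonalize_rows_mult_nth)
  then have "((\<lambda>k::int. gauss x (N' *v (w + of_int k *\<^sub>R axis i 1))) has_sum g' w) UNIV"
    if "w $ i = 0" for w
    using has_sum_gauss_fibre [OF x N'(1,2) that] that by (simp add: g'_def N'(3,4))
  then have "((\<lambda>w. gauss x (N' *v w)) has_sum S') int_vecs \<longleftrightarrow> (g' has_sum S') Z"
    unfolding Z_def by (intro has_sum_int_vecs_iff_fibres less_imp_le [OF gauss_pos])
  then have g': "(g' has_sum S') Z"
    using S' by (simp add: N'_def)
  have "((\<lambda>k::int. gauss x (N *v (w + of_int k *\<^sub>R axis i 1))) has_sum g w) UNIV"
    if "w $ i = 0" for w
    using has_sum_gauss_fibre [OF x col pos that] by (simp add: g_def a_def N'_def)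
  then have sum_N_iff: "((\<lambda>w. gauss x (N *v w)) has_sum infsum g Z) int_vecs \<longleftrightarrow> (g has_sum infsum g Z) Z"
    unfolding Z_def by (intro has_sum_int_vecs_iff_fibres less_imp_le [OF gauss_pos])
  have le: "g w \<le> g' w" for w
    unfolding g_def g'_def by (rule mult_left_mono [OF theta_le_theta_zero [OF xa] less_imp_le [OF gauss_pos]])
  have g0: "0 \<le> g w" for w
    unfolding g_def by (rule mult_nonneg_nonneg [OF less_imp_le [OF gauss_pos] less_imp_le [OF theta_pos [OF xa]]])
  have "g summable_on Z"
    by (rule summable_on_comparison_test [OF has_sum_imp_summable [OF g'] le g0])
  then have g: "(g has_sum infsum g Z) Z"
    by (rule has_sum_infsum)
  have "((\<lambda>w. gauss x (N *v w)) has_sum infsum g Z) int_vecs"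
    using g sum_N_iff by simp
  moreover have "infsum g Z \<le> S'"
    using g g' le by (rule has_sum_mono)
  moreover have "infsum g Z < S'" if "N $ i $ k / N $ i $ i \<notin> \<int>" for k
  proof -
    have "k \<noteq> i"
      using that pos by auto
    then have "axis k 1 \<in> Z"
      by (simp add: Z_def int_vecs_def axis_def)
    moreover have "(N *v axis k 1) $ i = N $ i $ k"
      unfolding matrix_vector_mult_basis by (simp add: column_def)
    then have "g (axis k 1) < g' (axis k 1)"
      unfolding g_def g'_def using that xa
      by (intro mult_strict_left_mono theta_less_theta_zero gauss_pos) (simp_all add: a_def)
    ultimately show ?thesis
      by (rule has_sum_strict_mono [OF g g' le])
  qed
  ultimately show ?thesis
    by blast
qed

lemma has_sum_gauss_diagonalize_rows:
  fixes M :: "real^('n::finite_linorder)^('n::finite_linorder)"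
  assumes x: "x > 0" and upper: "\<And>i j. j < i \<Longrightarrow> M $ i $ j = 0" and pos: "\<And>i. M $ i $ i > 0"
    and SD: "((\<lambda>w. gauss x (diagonalize_rows UNIV M *v w)) has_sum SD) int_vecs"
    and up: "\<And>r s. r \<in> C \<Longrightarrow> r < s \<Longrightarrow> s \<in> C"
  shows "\<exists>S. ((\<lambda>w. gauss x (diagonalize_rows (- C) M *v w)) has_sum S) int_vecs \<and> S \<le> SD
    \<and> ((\<exists>i\<in>C. \<exists>k. M $ i $ k / M $ i $ i \<notin> \<int>) \<longrightarrow> S < SD)"
proof -
  have "finite C"
    by simp
  then show ?thesis
    using up
  proof (induction C rule: finite_linorder_min_induct)
    case empty
    then show ?case
      using SD by auto
  next
    case (insert b A)
    have "s \<in> A" if "r \<in> A" "r < s" for r s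
    proof -
      have "b < s"
        using insert.hyps(2) that by (meson order.strict_trans)
      then show ?thesis
        using insert.prems [of r s] that by auto
    qed
    then obtain S' where S': "((\<lambda>w. gauss x (diagonalize_rows (- A) M *v w)) has_sum S') int_vecs"
      "S' \<le> SD" "(\<exists>i\<in>A. \<exists>k. M $ i $ k / M $ i $ i \<notin> \<int>) \<Longrightarrow> S' < SD"
      using insert.IH by blast
    define N where "N = diagonalize_rows (- insert b A) M"
    have "diagonalize_rows {b} N = diagonalize_rows (- A) M"
      using insert.hyps(2) by (auto simp: N_def diagonalize_rows_def vec_eq_iff)
    moreover have "N $ b $ b > 0" and row: "N $ b $ k = M $ b $ k" for k
      using pos by (simp_all add: N_def diagonalize_rows_def)
    moreover have "N $ r $ b = 0" if "r \<noteq> b" for r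
      using that insert.hyps(2) upper by (auto simp: N_def diagonalize_rows_def)
    ultimately obtain S where S: "((\<lambda>w. gauss x (N *v w)) has_sum S) int_vecs" "S \<le> S'"
      "(\<exists>k. M $ b $ k / M $ b $ b \<notin> \<int>) \<Longrightarrow> S < S'"
      using has_sum_gauss_diagonalize_row [OF x, of N b S'] S'(1) by (auto simp: row)
    have "S < SD" if "\<exists>i\<in>insert b A. \<exists>k. M $ i $ k / M $ i $ i \<notin> \<int>"
      using that S(2,3) S'(2,3) by fastforce
    moreover have "S \<le> SD"
      using S(2) S'(2) by linarith
    ultimately show ?case
      using S(1) unfolding N_def by blast
  qed
qed

lemma diag_mat_mult_nth: "(diag_mat a *v w) $ r = a $ r * w $ r"
proof -
  have "(diag_mat a *v w) $ r = (\<Sum>j\<in>UNIV. if j = r then a $ r * w $ r else 0)"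
    unfolding diag_mat_def matrix_vector_mult_def vec_lambda_beta by (intro sum.cong) auto
  then show ?thesis
    by simp
qed

lemma has_sum_gauss_diag_mat:
  fixes a :: "real^'n"
  assumes x: "x > 0" and pos: "\<And>i. a $ i > 0"
  shows "((\<lambda>w. gauss x (diag_mat a *v w)) has_sum (\<Prod>i\<in>UNIV. theta (x * (a $ i)\<^sup>2) 0)) int_vecs"
proof -
  define f where "f = (\<lambda>i (k::int). exp (- (x * (a $ i)\<^sup>2) * (of_int k + 0)\<^sup>2))"
  define T where "T = (\<Prod>i\<in>UNIV. theta (x * (a $ i)\<^sup>2) 0)"
  have xa: "x * (a $ i)\<^sup>2 > 0" for i
    using x pos [of i] by simp
  have "(\<lambda>k. norm (f i k)) summable_on UNIV" for i
    using theta_summable [OF xa, of i 0] by (simp add: f_def)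
  then have "infsum (\<lambda>g. \<Prod>i\<in>UNIV. f i (g i)) (PiE UNIV (\<lambda>_. UNIV)) = (\<Prod>i\<in>UNIV. infsum (f i) UNIV)"
    by (intro infsum_prod_PiE_abs) auto
  moreover have "infsum (f i) UNIV = theta (x * (a $ i)\<^sup>2) 0" for i
    by (simp add: f_def theta_def)
  ultimately have infsum: "infsum (\<lambda>g. \<Prod>i\<in>UNIV. f i (g i)) UNIV = T"
    by (simp add: T_def PiE_UNIV_domain)
  moreover have "T > 0"
    unfolding T_def using theta_pos [OF xa] by (intro prod_pos) auto
  ultimately have "(\<lambda>g. \<Prod>i\<in>UNIV. f i (g i)) summable_on UNIV"
    using infsum_not_exists by fastforce
  then have "((\<lambda>g. \<Prod>i\<in>UNIV. f i (g i)) has_sum T) UNIV"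
    using infsum has_sum_infsum by fastforce
  moreover have "gauss x (diag_mat a *v (\<chi> i. of_int (g i))) = (\<Prod>i\<in>UNIV. f i (g i))" for g
  proof -
    have "(norm (diag_mat a *v (\<chi> i. of_int (g i))))\<^sup>2 = (\<Sum>i\<in>UNIV. (a $ i)\<^sup>2 * (of_int (g i))\<^sup>2)"
      unfolding power2_norm_eq_inner inner_vec_def by (simp add: diag_mat_mult_nth power2_eq_square mult_ac)
    then show ?thesis
      by (simp add: gauss_def f_def sum_distrib_left exp_sum mult.assoc)
  qed
  ultimately have "((\<lambda>g. gauss x (diag_mat a *v (\<chi> i. of_int (g i)))) has_sum T) UNIV"
    by simp
  moreover have bij: "bij_betw (\<lambda>g. \<chi> i. of_int (g i)) UNIV int_vecs"
    by (rule bij_betwI [where g = "\<lambda>w i. \<lfloor>w $ i\<rfloor>"]) (auto simp: int_vecs_def)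
  ultimately show ?thesis
    using has_sum_reindex_bij_betw [OF bij, where f = "\<lambda>w. gauss x (diag_mat a *v w)"] by (simp add: T_def)
qed

lemma lattice_gen_subset_diag_mat:
  assumes a: "\<And>i. a $ i \<noteq> 0" and ratios: "\<And>i k. M $ i $ k / a $ i \<in> \<int>"
  shows "lattice_gen M \<subseteq> lattice_gen (diag_mat a)"
proof
  fix t assume "t \<in> lattice_gen M"
  then obtain w where t: "t = M *v w" and w: "w \<in> int_vecs"
    by (auto simp: lattice_gen_eq_image)
  define v where "v = (\<chi> i. \<Sum>k\<in>UNIV. M $ i $ k / a $ i * w $ k)"
  have "M $ i $ k / a $ i * w $ k \<in> \<int>" for i k
    using w by (intro Ints_mult ratios) (simp add: int_vecs_def)
  then have "v \<in> int_vecs"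
    unfolding v_def int_vecs_def vec_lambda_beta by (auto intro: Ints_sum)
  moreover have "(diag_mat a *v v) $ r = t $ r" for r
    unfolding diag_mat_mult_nth using a [of r]
    by (simp add: t v_def sum_distrib_left matrix_vector_mult_def)
  then have "diag_mat a *v v = t"
    by (simp add: vec_eq_iff)
  ultimately show "t \<in> lattice_gen (diag_mat a)"
    by (auto simp: lattice_gen_eq_image)
qed

lemma has_sum_gauss_lattice_gen_upper_triangular:
  fixes M :: "real^('n::finite_linorder)^('n::finite_linorder)"
  assumes x: "x > 0" and upper: "\<And>i j. j < i \<Longrightarrow> M $ i $ j = 0" and pos: "\<And>i. M $ i $ i > 0"
  obtains S where "(gauss x has_sum S) (lattice_gen M)"
    and "(\<exists>i k. M $ i $ k / M $ i $ i \<notin> \<int>) \<Longrightarrow> S < (\<Prod>i\<in>UNIV. theta (x * (M $ i $ i)\<^sup>2) 0)"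
proof -
  have "diagonalize_rows UNIV M = diag_mat (\<chi> i. M $ i $ i)"
    by (auto simp: diagonalize_rows_def diag_mat_def vec_eq_iff)
  then have "((\<lambda>w. gauss x (diagonalize_rows UNIV M *v w)) has_sum (\<Prod>i\<in>UNIV. theta (x * (M $ i $ i)\<^sup>2) 0))
      int_vecs"
    using has_sum_gauss_diag_mat [OF x, of "\<chi> i. M $ i $ i"] pos by simp
  from has_sum_gauss_diagonalize_rows [OF x upper pos this, of UNIV]
  obtain S where "((\<lambda>w. gauss x (M *v w)) has_sum S) int_vecs"
    and "(\<exists>i k. M $ i $ k / M $ i $ i \<notin> \<int>) \<Longrightarrow> S < (\<Prod>i\<in>UNIV. theta (x * (M $ i $ i)\<^sup>2) 0)"
    by (auto simp: diagonalize_rows_def)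
  moreover have "inj ((*v) M)"
    using upper pos by (intro inj_mult_upper_triangular) (auto simp: less_imp_neq [symmetric])
  ultimately show ?thesis
    using that has_sum_lattice_gen_iff by blast
qed

theorem theorem2:
  fixes M :: "real^('n::finite_linorder)^('n::finite_linorder)" and a :: "real^('n::finite_linorder)" and x :: real
  assumes apos: "\<forall>i. a $ i > 0"
    and upper: "\<forall>i j. j < i \<longrightarrow> M $ i $ j = 0"
    and diag: "\<forall>i. M $ i $ i = a $ i"
    and skew: "lattice_gen M \<noteq> lattice_gen (diag_mat a)"
    and xpos: "x > 0"
  shows "(\<Sum>\<^sub>\<infinity>t\<in>lattice_gen M. exp (- x * (norm t)\<^sup>2))
         < (\<Sum>\<^sub>\<infinity>t\<in>lattice_gen (diag_mat a). exp (- x * (norm t)\<^sup>2))"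
proof -
  define SD where "SD = (\<Prod>i\<in>UNIV. theta (x * (a $ i)\<^sup>2) 0)"
  obtain S where LM: "(gauss x has_sum S) (lattice_gen M)"
    and strict: "(\<exists>i k. M $ i $ k / a $ i \<notin> \<int>) \<Longrightarrow> S < SD"
    using has_sum_gauss_lattice_gen_upper_triangular [OF xpos, of M] upper diag apos
    unfolding SD_def by auto
  have "inj ((*v) (diag_mat a))"
    using apos by (intro inj_mult_upper_triangular) (auto simp: diag_mat_def less_imp_neq [symmetric])
  then have LD: "(gauss x has_sum SD) (lattice_gen (diag_mat a))"
    unfolding SD_def using has_sum_gauss_diag_mat [OF xpos, of a] apos by (simp add: has_sum_lattice_gen_iff)
  have "S < SD"
  proof (cases "\<exists>i k. M $ i $ k / a $ i \<notin> \<int>")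
    case False
    then have "lattice_gen M \<subseteq> lattice_gen (diag_mat a)"
      using apos by (intro lattice_gen_subset_diag_mat) (auto simp: less_imp_neq [symmetric])
    moreover from this skew obtain t where "t \<in> lattice_gen (diag_mat a) - lattice_gen M"
      by blast
    ultimately show ?thesis
      by (intro has_sum_strict_mono_neutral [OF LM LD]) (auto simp: gauss_pos less_imp_le [OF gauss_pos])
  qed (rule strict)
  then show ?thesis
    using infsumI [OF LM] infsumI [OF LD] by (simp add: gauss_def [abs_def])
qed

end
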